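(* For the system $\dot x=Ax+ub$ with $A=\begin{pmatrix}0&1&0\\-1&0&1\\0&0&0\end{pmatrix}$, $b=(0,0,1)^T$, $x(0)=0$, and any $\gamma>0$: there is no control of the form $u(t)=(-1)^{j-1}$ on $(t_{j-1},t_j)$, $j=1,\dots,2\rho$ (i.e. with an odd number $2\rho-1$ of switchings, $\rho\ge1$), nor its negative $-u(t)$, whose interval lengths $\tau_k=t_k-t_{k-1}$ all lie in $(0,2\pi)$, which satisfies $\tau_k+\tau_{k+1}=2\pi$ for all interior consecutive intervals $2\le k\le 2\rho-2$, and which steers the system to $(\gamma,0,\gamma)$. Likewise, no control $-u(t)$ with $u$ of the form $(-1)^{j-1}$ on $(t_{j-1},t_j)$, $j=1,\dots,2\rho+1$, satisfying $\tau_k\in(0,2\pi)$, $\tau_k+\tau_{k+1}=2\pi$ for $2\le k\le 2\rho-1$, and $\tau_{2\rho}+\tau_{2\rho+1}\le2\pi$, steers the system to $(\gamma,0,\gamma)$.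
   Context: These are the structural constraints that the switching function $\Phi(t)=c-A_0\sin(t+\theta)$ of a Pontryagin extremal imposes on bang-bang controls with constant-control intervals of length less than $2\pi$. *)

theory Defs
  imports "HOL-Analysis.Analysis"
begin

definition sysA :: "real^3^3" where
  "sysA = vector [vector [0, 1, 0], vector [-1, 0, 1], vector [0, 0, 0]]"

definition sysb :: "real^3" where
  "sysb = vector [0, 0, 1]"

definition tau :: "(nat \<Rightarrow> real) \<Rightarrow> nat \<Rightarrow> real" where
  "tau t k = t k - t (k - 1)"

text \<open>The bang-bang control with sign sigma (sigma = 1 gives u, sigma = -1 gives -u),
  equal to sigma * (-1)^(j-1) on (t (j-1), t j), j = 1..N, with t 0 = 0, steers the
  system x' = A x + u b from x(0) = 0 to (gamma,0,gamma) at time t N: there is an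
  (absolutely continuous, piecewise C1) solution on [0, t N].\<close>
definition steers :: "real \<Rightarrow> nat \<Rightarrow> (nat \<Rightarrow> real) \<Rightarrow> real \<Rightarrow> bool" where
  "steers \<sigma> N t \<gamma> \<longleftrightarrow>
     (\<exists>x :: real \<Rightarrow> real^3.
        continuous_on {0..t N} x \<and> x 0 = 0 \<and>
        (\<forall>j\<in>{1..N}. \<forall>s\<in>{t (j - 1)<..<t j}.
            (x has_vector_derivative (sysA *v x s + (\<sigma> * (-1) ^ (j - 1)) *\<^sub>R sysb)) (at s)) \<and>
        x (t N) = vector [\<gamma>, 0, \<gamma>])"

end

theory Submission
  imports Defs
begin

(* Along a constant-control arc, the rotated coordinates rot1, rot2 of (x1 - x3, x2) and the
   coordinate x3 change by explicit amounts (first integrals of the system).  Summing over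
   all switching intervals turns "the control steers 0 to (gamma, 0, gamma)" into three
   moment equations on the switching times: alternating sums of the increments of sin t,
   cos t and t vanish, vanish, and equal gamma (up to the sign of the control).

   The hypothesis tau k + tau (k+1) = 2 pi on the interior intervals makes switching times
   two steps apart differ by 2 pi, so the alternating sums collapse to closed forms that
   involve only t 1, t 2 and the last one or two intervals.  What remains is elementary
   trigonometry: in the even case a unit-vector identity forces cos (t 1) = 1, impossible
   for 0 < t 1 < 2 pi; in the odd case the sine/cosine equations force the first and last
   intervals to be equal, after which the time equation (gamma > 0) yields a contradiction. *)

lemma trajectory_component_derivatives:
  fixes x :: "real \<Rightarrow> real^3"
  assumes "(x has_vector_derivative (sysA *v x s + u *\<^sub>R sysb)) (at s)"
  shows "((\<lambda>s. x s $ 1) has_real_derivative x s $ 2) (at s)"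
    and "((\<lambda>s. x s $ 2) has_real_derivative x s $ 3 - x s $ 1) (at s)"
    and "((\<lambda>s. x s $ 3) has_real_derivative u) (at s)"
proof -
  have component: "((\<lambda>s. x s $ i) has_real_derivative (sysA *v x s + u *\<^sub>R sysb) $ i) (at s)" for i
    using bounded_linear.has_vector_derivative[OF bounded_linear_vec_nth assms, of i]
    by (simp add: has_real_derivative_iff_has_vector_derivative)
  have "(sysA *v x s + u *\<^sub>R sysb) $ 1 = x s $ 2"
       "(sysA *v x s + u *\<^sub>R sysb) $ 2 = x s $ 3 - x s $ 1"
       "(sysA *v x s + u *\<^sub>R sysb) $ 3 = u"
    by (simp_all add: sysA_def sysb_def matrix_vector_mult_def sum_3)
  then show "((\<lambda>s. x s $ 1) has_real_derivative x s $ 2) (at s)"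
    and "((\<lambda>s. x s $ 2) has_real_derivative x s $ 3 - x s $ 1) (at s)"
    and "((\<lambda>s. x s $ 3) has_real_derivative u) (at s)"
    using component[of 1] component[of 2] component[of 3] by simp_all
qed

(* The vector (x1 - x3, x2) rotated by the angle s.  Along a trajectory with constant
   control u it moves like u times (-sin s, cos s); see the next lemma. *)
definition rot1 :: "(real \<Rightarrow> real^3) \<Rightarrow> real \<Rightarrow> real" where
  "rot1 x s = cos s * (x s $ 1 - x s $ 3) - sin s * x s $ 2"

definition rot2 :: "(real \<Rightarrow> real^3) \<Rightarrow> real \<Rightarrow> real" where
  "rot2 x s = sin s * (x s $ 1 - x s $ 3) + cos s * x s $ 2"

(* On an interval where the control is the constant u, the rotated coordinates and x3
   change by explicit amounts: rot1 + u sin, rot2 - u cos and x3 - u s are first integrals. *)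
lemma constant_control_increments:
  fixes x :: "real \<Rightarrow> real^3"
  assumes ab: "a < b" and cont: "continuous_on {a..b} x"
    and ode: "\<And>s. a < s \<Longrightarrow> s < b \<Longrightarrow>
                 (x has_vector_derivative (sysA *v x s + u *\<^sub>R sysb)) (at s)"
  shows "rot1 x b - rot1 x a = - u * (sin b - sin a)"
    and "rot2 x b - rot2 x a = u * (cos b - cos a)"
    and "x b $ 3 - x a $ 3 = u * (b - a)"
proof -
  note deriv = trajectory_component_derivatives[OF ode]
  have "rot1 x b + u * sin b = rot1 x a + u * sin a"
  proof (rule DERIV_isconst_end[OF ab, where f = "\<lambda>s. rot1 x s + u * sin s"])
    show "continuous_on {a..b} (\<lambda>s. rot1 x s + u * sin s)"
      using cont unfolding rot1_def by (intro continuous_intros)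
    fix s assume "a < s" "s < b"
    with deriv show "((\<lambda>s. rot1 x s + u * sin s) has_real_derivative 0) (at s)"
      unfolding rot1_def by (auto intro!: derivative_eq_intros simp: algebra_simps)
  qed
  then show "rot1 x b - rot1 x a = - u * (sin b - sin a)" by (simp add: algebra_simps)
  have "rot2 x b - u * cos b = rot2 x a - u * cos a"
  proof (rule DERIV_isconst_end[OF ab, where f = "\<lambda>s. rot2 x s - u * cos s"])
    show "continuous_on {a..b} (\<lambda>s. rot2 x s - u * cos s)"
      using cont unfolding rot2_def by (intro continuous_intros)
    fix s assume "a < s" "s < b"
    with deriv show "((\<lambda>s. rot2 x s - u * cos s) has_real_derivative 0) (at s)"
      unfolding rot2_def by (auto intro!: derivative_eq_intros simp: algebra_simps)
  qed
  then show "rot2 x b - rot2 x a = u * (cos b - cos a)" by (simp add: algebra_simps)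
  have "x b $ 3 - u * b = x a $ 3 - u * a"
  proof (rule DERIV_isconst_end[OF ab, where f = "\<lambda>s. x s $ 3 - u * s"])
    show "continuous_on {a..b} (\<lambda>s. x s $ 3 - u * s)"
      using cont by (intro continuous_intros)
    fix s assume "a < s" "s < b"
    with deriv show "((\<lambda>s. x s $ 3 - u * s) has_real_derivative 0) (at s)"
      by (auto intro!: derivative_eq_intros)
  qed
  then show "x b $ 3 - x a $ 3 = u * (b - a)" by (simp add: algebra_simps)
qed

definition alt_incr :: "nat \<Rightarrow> (nat \<Rightarrow> real) \<Rightarrow> real" where
  "alt_incr N g = (\<Sum>j<N. (-1) ^ j * (g (Suc j) - g j))"

lemma steers_moment_equations:
  assumes st: "steers \<sigma> N t \<gamma>" and t0: "t 0 = 0"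
    and incr: "\<And>j. j < N \<Longrightarrow> t j < t (Suc j)"
  shows "\<sigma> * alt_incr N (\<lambda>j. sin (t j)) = 0"
    and "\<sigma> * alt_incr N (\<lambda>j. cos (t j)) = 0"
    and "\<sigma> * alt_incr N t = \<gamma>"
proof -
  obtain x :: "real \<Rightarrow> real^3" where cont: "continuous_on {0..t N} x" and x0: "x 0 = 0"
    and ode: "\<forall>j\<in>{1..N}. \<forall>s\<in>{t (j - 1)<..<t j}.
       (x has_vector_derivative (sysA *v x s + (\<sigma> * (-1) ^ (j - 1)) *\<^sub>R sysb)) (at s)"
    and xN: "x (t N) = vector [\<gamma>, 0, \<gamma>]"
    using st unfolding steers_def by blast
  have mono: "t i \<le> t i'" if "i \<le> i'" "i' \<le> N" for i i'
    using lift_Suc_mono_le_ivl[where N = "{..<N}" and f = t] incr that by fastforce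
  have increments: "rot1 x (t (Suc j)) - rot1 x (t j) = - (\<sigma> * (-1) ^ j) * (sin (t (Suc j)) - sin (t j))
      \<and> rot2 x (t (Suc j)) - rot2 x (t j) = (\<sigma> * (-1) ^ j) * (cos (t (Suc j)) - cos (t j))
      \<and> x (t (Suc j)) $ 3 - x (t j) $ 3 = (\<sigma> * (-1) ^ j) * (t (Suc j) - t j)"
    if j: "j < N" for j
  proof -
    have "t 0 \<le> t j" "t (Suc j) \<le> t N"
      using mono j by auto
    then have "continuous_on {t j..t (Suc j)} x"
      using t0 by (auto intro: continuous_on_subset[OF cont])
    moreover have "\<And>s. t j < s \<Longrightarrow> s < t (Suc j) \<Longrightarrow>
        (x has_vector_derivative (sysA *v x s + (\<sigma> * (-1) ^ j) *\<^sub>R sysb)) (at s)"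
      using ode j by (metis Suc_leI atLeastAtMost_iff diff_Suc_1 greaterThanLessThan_iff le_add1 plus_1_eq_Suc)
    ultimately show ?thesis
      using constant_control_increments[OF incr[OF j]] by blast
  qed
  have "rot1 x (t N) - rot1 x (t 0) = (\<Sum>j<N. rot1 x (t (Suc j)) - rot1 x (t j))"
    by (rule sum_lessThan_telescope[symmetric])
  also have "\<dots> = - (\<sigma> * alt_incr N (\<lambda>j. sin (t j)))"
    using increments by (simp add: alt_incr_def sum_distrib_left sum_negf[symmetric] mult.assoc)
  finally show "\<sigma> * alt_incr N (\<lambda>j. sin (t j)) = 0"
    using x0 xN t0 by (simp add: rot1_def)
  have "rot2 x (t N) - rot2 x (t 0) = (\<Sum>j<N. rot2 x (t (Suc j)) - rot2 x (t j))"
    by (rule sum_lessThan_telescope[symmetric])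
  also have "\<dots> = \<sigma> * alt_incr N (\<lambda>j. cos (t j))"
    using increments by (simp add: alt_incr_def sum_distrib_left mult.assoc)
  finally show "\<sigma> * alt_incr N (\<lambda>j. cos (t j)) = 0"
    using x0 xN t0 by (simp add: rot2_def)
  have "x (t N) $ 3 - x (t 0) $ 3 = (\<Sum>j<N. x (t (Suc j)) $ 3 - x (t j) $ 3)"
    by (rule sum_lessThan_telescope[symmetric])
  also have "\<dots> = \<sigma> * alt_incr N t"
    using increments by (simp add: alt_incr_def sum_distrib_left mult.assoc)
  finally show "\<sigma> * alt_incr N t = \<gamma>"
    using x0 xN t0 by simp
qed

lemma alt_incr_Suc:
  "alt_incr (Suc N) g = alt_incr N g + (-1) ^ N * (g (Suc N) - g N)"
  by (simp add: alt_incr_def)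

lemma alt_incr_after_odd:
  "alt_incr (2 * m + 2) g = alt_incr (2 * m + 1) g - (g (2 * m + 2) - g (2 * m + 1))"
  "alt_incr (2 * m + 3) g
     = alt_incr (2 * m + 1) g - (g (2 * m + 2) - g (2 * m + 1)) + (g (2 * m + 3) - g (2 * m + 2))"
proof -
  have "2 * m + 2 = Suc (2 * m + 1)" "2 * m + 3 = Suc (Suc (2 * m + 1))"
    by simp_all
  moreover have "(-1::real) ^ (2 * m + 1) = -1" "(-1::real) ^ Suc (2 * m + 1) = 1"
    by simp_all
  ultimately show "alt_incr (2 * m + 2) g = alt_incr (2 * m + 1) g - (g (2 * m + 2) - g (2 * m + 1))"
    "alt_incr (2 * m + 3) g
     = alt_incr (2 * m + 1) g - (g (2 * m + 2) - g (2 * m + 1)) + (g (2 * m + 3) - g (2 * m + 2))"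
    by (simp_all only: alt_incr_Suc) simp_all
qed

lemma switching_times_shift:
  assumes pair: "\<And>k. 2 \<le> k \<Longrightarrow> Suc k \<le> M \<Longrightarrow> tau t k + tau t (Suc k) = 2 * pi"
    and j: "1 \<le> j"
  shows "j + 2 * n \<le> M \<Longrightarrow> t (j + 2 * n) = t j + 2 * real n * pi"
proof (induction n)
  case 0
  then show ?case by simp
next
  case (Suc n)
  have "tau t (Suc (j + 2 * n)) + tau t (Suc (Suc (j + 2 * n))) = 2 * pi"
    using pair[of "Suc (j + 2 * n)"] j Suc.prems by simp
  then show ?case
    using Suc by (simp add: tau_def algebra_simps)
qed

lemma sin_cos_shift_2npi:
  "sin (x + 2 * real n * pi) = sin x" "cos (x + 2 * real n * pi) = cos x"
  by (simp_all add: sin_add cos_add)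

(* Closed form of an alternating sum whose odd and even values advance by p every two
   steps: each pair of terms contributes the same amount 2 g 1 - 2 g 2 + p. *)
lemma alt_incr_two_periodic:
  fixes g :: "nat \<Rightarrow> real"
  shows "(\<And>k. k \<le> m \<Longrightarrow> g (2 * k + 1) = g 1 + real k * p) \<Longrightarrow>
         (\<And>k. 1 \<le> k \<Longrightarrow> k \<le> m \<Longrightarrow> g (2 * k) = g 2 + (real k - 1) * p) \<Longrightarrow>
         alt_incr (2 * m + 1) g = g 1 - g 0 + real m * (2 * g 1 - 2 * g 2 + p)"
proof (induction m)
  case 0
  then show ?case by (simp add: alt_incr_def)
next
  case (Suc m)
  have prev: "alt_incr (2 * m + 1) g = g 1 - g 0 + real m * (2 * g 1 - 2 * g 2 + p)"
    using Suc by simp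
  have "g (2 * m + 1) = g 1 + real m * p" "g (2 * m + 2) = g 2 + real m * p"
       "g (2 * m + 3) = g 1 + (real m + 1) * p"
    using Suc.prems(1)[of m] Suc.prems(1)[of "Suc m"] Suc.prems(2)[of "Suc m"]
    by (simp_all add: algebra_simps eval_nat_numeral)
  moreover have "alt_incr (2 * Suc m + 1) g
      = alt_incr (2 * m + 1) g - (g (2 * m + 2) - g (2 * m + 1)) + (g (2 * m + 3) - g (2 * m + 2))"
    using alt_incr_after_odd(2)[of m g] by (simp add: eval_nat_numeral)
  ultimately show ?case
    using prev by (simp add: algebra_simps)
qed

lemma alt_incr_periodic_times:
  assumes pair: "\<And>k. 2 \<le> k \<Longrightarrow> Suc k \<le> M \<Longrightarrow> tau t k + tau t (Suc k) = 2 * pi"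
    and m: "2 * m + 1 \<le> M"
  shows "alt_incr (2 * m + 1) (\<lambda>j. sin (t j)) = sin (t 1) - sin (t 0) + 2 * real m * (sin (t 1) - sin (t 2))"
    and "alt_incr (2 * m + 1) (\<lambda>j. cos (t j)) = cos (t 1) - cos (t 0) + 2 * real m * (cos (t 1) - cos (t 2))"
    and "alt_incr (2 * m + 1) t = t 1 - t 0 + 2 * real m * (t 1 - t 2 + pi)"
proof -
  note shift = switching_times_shift[where M = M and t = t, OF pair]
  have odd: "t (2 * k + 1) = t 1 + 2 * real k * pi" if "k \<le> m" for k
    using shift[where j = 1 and n = k] that m by (simp add: add.commute)
  have even: "t (2 * k) = t 2 + 2 * real (k - 1) * pi" if "1 \<le> k" "k \<le> m" for k
  proof -
    have "2 * k = 2 + 2 * (k - 1)" using that by simp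
    then show ?thesis
      using shift[where j = 2 and n = "k - 1"] that m by simp
  qed
  have periodic_odd: "sin (t (2 * k + 1)) = sin (t 1)" "cos (t (2 * k + 1)) = cos (t 1)"
    if "k \<le> m" for k
    by (simp_all only: odd[OF that] sin_cos_shift_2npi)
  have periodic_even: "sin (t (2 * k)) = sin (t 2)" "cos (t (2 * k)) = cos (t 2)"
    if "1 \<le> k" "k \<le> m" for k
    by (simp_all only: even[OF that] sin_cos_shift_2npi)
  have "alt_incr (2 * m + 1) (\<lambda>j. sin (t j)) = sin (t 1) - sin (t 0) + real m * (2 * sin (t 1) - 2 * sin (t 2) + 0)"
    by (rule alt_incr_two_periodic) (use periodic_odd periodic_even in simp_all)
  then show "alt_incr (2 * m + 1) (\<lambda>j. sin (t j)) = sin (t 1) - sin (t 0) + 2 * real m * (sin (t 1) - sin (t 2))"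
    by (simp add: algebra_simps)
  have "alt_incr (2 * m + 1) (\<lambda>j. cos (t j)) = cos (t 1) - cos (t 0) + real m * (2 * cos (t 1) - 2 * cos (t 2) + 0)"
    by (rule alt_incr_two_periodic) (use periodic_odd periodic_even in simp_all)
  then show "alt_incr (2 * m + 1) (\<lambda>j. cos (t j)) = cos (t 1) - cos (t 0) + 2 * real m * (cos (t 1) - cos (t 2))"
    by (simp add: algebra_simps)
  have "alt_incr (2 * m + 1) t = t 1 - t 0 + real m * (2 * t 1 - 2 * t 2 + 2 * pi)"
    by (rule alt_incr_two_periodic) (use odd even in \<open>simp_all add: of_nat_diff algebra_simps\<close>)
  then show "alt_incr (2 * m + 1) t = t 1 - t 0 + 2 * real m * (t 1 - t 2 + pi)"
    by (simp add: algebra_simps)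
qed

(* cos takes the value 1 only at multiples of 2 pi; used for the first switching time t 1. *)
lemma cos_neq_one_within_period:
  assumes "0 < x" "x < 2 * pi"
  shows "cos x \<noteq> 1"
proof
  assume "cos x = 1"
  then obtain n :: int where n: "x = of_int n * 2 * pi"
    using cos_one_2pi_int by blast
  with assms have "0 < of_int n * (2 * pi)" "of_int n * (2 * pi) < 1 * (2 * pi)"
    by (simp_all add: mult.assoc)
  then have "0 < n" "n < 1"
    by (simp_all add: zero_less_mult_iff mult_less_cancel_right)
  then show False by linarith
qed

(* If unit vectors v1, v2, v3 satisfy (2n+2) v1 - 2n v2 = (1,0) + v3 with n >= 0, then
   v1 = (1,0): comparing squared lengths forces v3 = (1,0) and, for n > 0, v1 = v2. *)
lemma unit_vector_balance:
  fixes c1 s1 c2 s2 c3 s3 n :: real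
  assumes n: "n \<ge> 0"
    and unit: "c1\<^sup>2 + s1\<^sup>2 = 1" "c2\<^sup>2 + s2\<^sup>2 = 1" "c3\<^sup>2 + s3\<^sup>2 = 1"
    and cos_eq: "(2 * n + 2) * c1 - 2 * n * c2 = 1 + c3"
    and sin_eq: "(2 * n + 2) * s1 - 2 * n * s2 = s3"
  shows "c1 = 1"
proof -
  define d where "d = c1 * c2 + s1 * s2"
  have dist: "(c1 - c2)\<^sup>2 + (s1 - s2)\<^sup>2 = 2 - 2 * d"
    using unit unfolding d_def by (simp add: power2_eq_square algebra_simps)
  have "2 + 2 * c3 = (1 + c3)\<^sup>2 + s3\<^sup>2"
    using unit(3) by (simp add: power2_eq_square algebra_simps)
  also have "\<dots> = ((2 * n + 2) * c1 - 2 * n * c2)\<^sup>2 + ((2 * n + 2) * s1 - 2 * n * s2)\<^sup>2"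
    by (simp only: cos_eq sin_eq)
  also have "\<dots> = (2 * n + 2)\<^sup>2 * (c1\<^sup>2 + s1\<^sup>2) + 4 * n\<^sup>2 * (c2\<^sup>2 + s2\<^sup>2) - 8 * n * (n + 1) * d"
    unfolding d_def by (simp add: power2_eq_square algebra_simps)
  also have "\<dots> = 4 + 8 * n * (n + 1) * (1 - d)"
    using unit by (simp add: power2_eq_square algebra_simps)
  finally have balance: "2 + 2 * c3 = 4 + 8 * n * (n + 1) * (1 - d)" .
  have "d \<le> 1"
    using dist by (smt (verit) zero_le_power2)
  then have "0 \<le> 8 * n * (n + 1) * (1 - d)"
    using n by simp
  moreover have "c3 \<le> 1"
    using unit(3) by (smt (verit) zero_le_power2 power2_le_imp_le one_power2)
  ultimately have c3: "c3 = 1"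
    using balance by linarith
  with balance have "n * (n + 1) * (1 - d) = 0"
    by simp
  show ?thesis
  proof (cases "n = 0")
    case True
    then show ?thesis using cos_eq c3 by simp
  next
    case False
    with \<open>n * (n + 1) * (1 - d) = 0\<close> n have "d = 1" by simp
    with dist have "c1 = c2"
      by (smt (verit) zero_le_power2 sum_power2_eq_zero_iff)
    then show ?thesis using cos_eq c3 by (simp add: algebra_simps)
  qed
qed

(* Writing c + a + b = 2 psi and using half-angle
   formulas, the two moment equations say sin psi * cos psi = K cos X and sin psi ^ 2 = K sin X
   with K = 2n sin (a/2) > 0; this forces X = psi (i.e. b = c) and sin psi = K. *)
lemma odd_case_trig_reduction:
  fixes a b c n :: real
  assumes c: "0 < c" "c < 2 * pi" and a: "0 < a" "a < 2 * pi" and b: "0 < b" "b < 2 * pi"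
    and n: "n > 0"
    and sin_eq: "sin (c + a + b) = - 2 * n * (sin c - sin (c + a))"
    and cos_eq: "cos (c + a + b) = 1 - 2 * n * (cos c - cos (c + a))"
  shows "b = c" and "sin (c + a / 2) = 2 * n * sin (a / 2)"
proof -
  define h where "h = a / 2"
  define \<psi> where "\<psi> = (c + a + b) / 2"
  define X where "X = \<psi> + (c - b) / 2"
  have angles: "c = X - h" "c + a = X + h" "c + a + b = 2 * \<psi>"
    unfolding X_def h_def \<psi>_def by (simp_all add: field_simps)
  have "sin h > 0"
    unfolding h_def using a by (intro sin_gt_zero) auto
  define K where "K = 2 * n * sin h"
  have K: "K > 0"
    unfolding K_def using \<open>sin h > 0\<close> n by simp
  have sin_prod: "sin \<psi> * cos \<psi> = K * cos X"
  proof -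
    have "sin (2 * \<psi>) = - 2 * n * (sin (X - h) - sin (X + h))"
      unfolding angles[symmetric] by (rule sin_eq)
    then show ?thesis
      unfolding sin_double K_def by (simp add: sin_add sin_diff algebra_simps)
  qed
  have sin_sq: "sin \<psi> ^ 2 = K * sin X"
  proof -
    have "cos (2 * \<psi>) = 1 - 2 * n * (cos (X - h) - cos (X + h))"
      unfolding angles[symmetric] by (rule cos_eq)
    then show ?thesis
      unfolding cos_double_sin K_def by (simp add: cos_add cos_diff algebra_simps)
  qed
  have "K * sin (X - \<psi>) = sin \<psi> ^ 2 * cos \<psi> - sin \<psi> * cos \<psi> * sin \<psi>"
    using sin_prod sin_sq by (simp add: sin_diff algebra_simps)
  then have "sin ((c - b) / 2) = 0"
    using K unfolding X_def by (simp add: power2_eq_square)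
  then have "(c - b) / 2 = 0"
    using sin_eq_0_pi[of "(c - b) / 2"] b c by simp
  then have X: "X = \<psi>"
    unfolding X_def by simp
  from \<open>(c - b) / 2 = 0\<close> show "b = c"
    by simp
  have "sin \<psi> = sin \<psi> * (cos \<psi> ^ 2 + sin \<psi> ^ 2)"
    by simp
  also have "\<dots> = cos \<psi> * (sin \<psi> * cos \<psi>) + sin \<psi> * sin \<psi> ^ 2"
    by algebra
  also have "\<dots> = cos \<psi> * (K * cos \<psi>) + sin \<psi> * (K * sin \<psi>)"
    using sin_prod sin_sq X by (simp only:)
  also have "\<dots> = K * (cos \<psi> ^ 2 + sin \<psi> ^ 2)"
    by algebra
  finally have "sin \<psi> = K"
    by simp
  moreover have "\<psi> = c + h"
    unfolding \<psi>_def h_def using \<open>b = c\<close> by simp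
  ultimately show "sin (c + a / 2) = 2 * n * sin (a / 2)"
    unfolding K_def h_def by simp
qed

(* The remaining contradiction in the odd case: sin (c + a/2) < 2 sin (a/2) whenever
   a + c <= 2 pi, and either a >= pi or (by the time equation) c < a/2. *)
lemma odd_case_sine_bound:
  fixes a c n :: real
  assumes c: "0 < c" "c < 2 * pi" and a: "0 < a" "a < 2 * pi" and ac: "a + c \<le> 2 * pi"
    and n: "n \<ge> 1"
    and sin_eq: "sin (c + a / 2) = 2 * n * sin (a / 2)"
    and time_ineq: "2 * c + (n - 1) * (2 * pi - 2 * a) < a"
  shows False
proof -
  define h where "h = a / 2"
  have sh: "sin h > 0"
    unfolding h_def using a by (intro sin_gt_zero) auto
  have expand: "sin (c + h) = sin c * cos h + cos c * sin h"
    by (simp add: sin_add)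
  have "cos c * sin h \<le> sin h"
    using sh cos_le_one[of c] by (simp add: mult_le_cancel_right1)
  moreover have "sin c * cos h < sin h"
  proof (cases "a \<ge> pi")
    case True
    then have "cos h \<le> 0"
      unfolding h_def using a cos_mono_le_eq[of "pi / 2" "a / 2"] by auto
    moreover have "sin c \<ge> 0"
      using c ac True by (intro sin_ge_zero) auto
    ultimately show ?thesis
      using sh by (smt (verit) mult_nonneg_nonpos)
  next
    case False
    then have "0 \<le> (n - 1) * (2 * pi - 2 * a)"
      using n by simp
    then have "c < h"
      using time_ineq unfolding h_def by linarith
    then have "sin c < sin h" and "sin c \<ge> 0"
      using c False unfolding h_def by (auto intro: sin_monotone_2pi sin_ge_zero)
    moreover have "sin c * cos h \<le> sin c"
      using \<open>sin c \<ge> 0\<close> cos_le_one[of h] by (simp add: mult_left_le)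
    ultimately show ?thesis
      by linarith
  qed
  ultimately have "sin (c + h) < 2 * sin h"
    using expand by linarith
  moreover have "2 * sin h \<le> 2 * n * sin h"
    using sh n by simp
  ultimately show False
    using sin_eq unfolding h_def by simp
qed

(* Even number 2m+2 of intervals (odd number of switchings), either sign of the control:
   the moment equations reduce to the unit-vector balance, forcing cos (t 1) = 1. *)
lemma even_switching_impossible:
  fixes \<sigma> \<gamma> :: real and t :: "nat \<Rightarrow> real"
  assumes \<sigma>: "\<sigma> \<noteq> 0" and t0: "t 0 = 0"
    and lengths: "\<And>k. 1 \<le> k \<Longrightarrow> k \<le> 2 * m + 2 \<Longrightarrow> 0 < tau t k \<and> tau t k < 2 * pi"
    and pair: "\<And>k. 2 \<le> k \<Longrightarrow> Suc k \<le> 2 * m + 1 \<Longrightarrow> tau t k + tau t (Suc k) = 2 * pi"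
  shows "\<not> steers \<sigma> (2 * m + 2) t \<gamma>"
proof
  assume st: "steers \<sigma> (2 * m + 2) t \<gamma>"
  have incr: "t j < t (Suc j)" if "j < 2 * m + 2" for j
    using lengths[of "Suc j"] that by (simp add: tau_def)
  note moments = steers_moment_equations[OF st t0 incr]
  have last_odd: "t (2 * m + 1) = t 1 + 2 * real m * pi"
    using switching_times_shift[where M = "2 * m + 1" and t = t, OF pair, where j = 1 and n = m]
    by (simp add: add.commute)
  then have last_odd_trig: "sin (t (2 * m + 1)) = sin (t 1)" "cos (t (2 * m + 1)) = cos (t 1)"
    by (simp_all only: sin_cos_shift_2npi)
  note periodic = alt_incr_periodic_times[where M = "2 * m + 1" and t = t, OF pair, of m]
  have "alt_incr (2 * m + 2) (\<lambda>j. sin (t j)) = 0"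
    using moments(1) \<sigma> by simp
  then have sin_balance: "(2 * real m + 2) * sin (t 1) - 2 * real m * sin (t 2) = sin (t (2 * m + 2))"
    using alt_incr_after_odd(1)[of m "\<lambda>j. sin (t j)"] periodic(1) last_odd_trig t0 by (simp add: algebra_simps)
  have "alt_incr (2 * m + 2) (\<lambda>j. cos (t j)) = 0"
    using moments(2) \<sigma> by simp
  then have cos_balance: "(2 * real m + 2) * cos (t 1) - 2 * real m * cos (t 2) = 1 + cos (t (2 * m + 2))"
    using alt_incr_after_odd(1)[of m "\<lambda>j. cos (t j)"] periodic(2) last_odd_trig t0 by (simp add: algebra_simps)
  have "cos (t 1) = 1"
    using unit_vector_balance[of "real m" "cos (t 1)" "sin (t 1)" "cos (t 2)" "sin (t 2)"
        "cos (t (2 * m + 2))" "sin (t (2 * m + 2))"] sin_balance cos_balance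
    by simp
  moreover have "0 < t 1" "t 1 < 2 * pi"
    using lengths[of 1] t0 by (simp_all add: tau_def)
  ultimately show False
    using cos_neq_one_within_period by blast
qed

(* Odd number 2m+3 of intervals, control starting with -1, last two intervals of total
   length at most 2 pi: the sine/cosine equations force b = c and the time equation
   (which uses gamma > 0) then contradicts the resulting sine identity. *)
lemma odd_switching_impossible:
  fixes \<gamma> :: real and t :: "nat \<Rightarrow> real"
  assumes \<gamma>: "\<gamma> > 0" and t0: "t 0 = 0"
    and lengths: "\<And>k. 1 \<le> k \<Longrightarrow> k \<le> 2 * m + 3 \<Longrightarrow> 0 < tau t k \<and> tau t k < 2 * pi"
    and pair: "\<And>k. 2 \<le> k \<Longrightarrow> Suc k \<le> 2 * m + 2 \<Longrightarrow> tau t k + tau t (Suc k) = 2 * pi"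
    and last_pair: "tau t (2 * m + 2) + tau t (2 * m + 3) \<le> 2 * pi"
  shows "\<not> steers (-1) (2 * m + 3) t \<gamma>"
proof
  assume st: "steers (-1) (2 * m + 3) t \<gamma>"
  have incr: "t j < t (Suc j)" if "j < 2 * m + 3" for j
    using lengths[of "Suc j"] that by (simp add: tau_def)
  note moments = steers_moment_equations[OF st t0 incr]
  define c where "c = t 1"
  define a where "a = t 2 - t 1"
  define b where "b = t (2 * m + 3) - t (2 * m + 2)"
  note shift = switching_times_shift[where M = "2 * m + 2" and t = t, OF pair]
  have times: "t (2 * m + 1) = c + 2 * real m * pi" "t (2 * m + 2) = (c + a) + 2 * real m * pi"
      "t (2 * m + 3) = (c + a + b) + 2 * real m * pi"
    using shift[where j = 1 and n = m] shift[where j = 2 and n = m]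
    unfolding a_def b_def c_def by (simp_all add: add.commute)
  then have trig: "sin (t (2 * m + 1)) = sin c" "cos (t (2 * m + 1)) = cos c"
      "sin (t (2 * m + 2)) = sin (c + a)" "cos (t (2 * m + 2)) = cos (c + a)"
      "sin (t (2 * m + 3)) = sin (c + a + b)" "cos (t (2 * m + 3)) = cos (c + a + b)"
    by (simp_all only: sin_cos_shift_2npi)
  note periodic = alt_incr_periodic_times[where M = "2 * m + 2" and t = t, OF pair, of m]
  have sin_eq: "sin (c + a + b) = - 2 * (real m + 1) * (sin c - sin (c + a))"
    using moments(1) alt_incr_after_odd(2)[of m "\<lambda>j. sin (t j)"] periodic(1) trig t0
    unfolding a_def c_def by (simp add: algebra_simps)
  have cos_eq: "cos (c + a + b) = 1 - 2 * (real m + 1) * (cos c - cos (c + a))"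
    using moments(2) alt_incr_after_odd(2)[of m "\<lambda>j. cos (t j)"] periodic(2) trig t0
    unfolding a_def c_def by (simp add: algebra_simps)
  have time_ineq: "c + b + real m * (2 * pi - 2 * a) < a"
    using moments(3) alt_incr_after_odd(2)[of m t] periodic(3) times t0 \<gamma>
    unfolding a_def c_def by (simp add: algebra_simps)
  have ranges: "0 < c" "c < 2 * pi" "0 < a" "a < 2 * pi" "0 < b" "b < 2 * pi"
    using lengths[of 1] lengths[of 2] lengths[of "2 * m + 3"] t0
    unfolding a_def b_def c_def by (simp_all add: tau_def)
  have "a + b \<le> 2 * pi"
    using last_pair times unfolding tau_def b_def by simp
  obtain "b = c" and sin_half: "sin (c + a / 2) = 2 * (real m + 1) * sin (a / 2)"
    using odd_case_trig_reduction[OF ranges, of "real m + 1"] sin_eq cos_eq by auto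
  show False
    by (rule odd_case_sine_bound[of c a "real m + 1"])
       (use ranges \<open>a + b \<le> 2 * pi\<close> \<open>b = c\<close> sin_half time_ineq in simp_all)
qed

theorem mainTheorem8:
  fixes \<gamma> :: real and \<rho> :: nat
  assumes "\<gamma> > 0" and "\<rho> \<ge> 1"
  shows "(\<forall>\<sigma>\<in>{1, -1::real}. \<forall>t :: nat \<Rightarrow> real.
            t 0 = 0 \<and>
            (\<forall>k\<in>{1..2*\<rho>}. tau t k \<in> {0<..<2*pi}) \<and>
            (\<forall>k\<in>{2..2*\<rho>-2}. tau t k + tau t (k+1) = 2*pi)
            \<longrightarrow> \<not> steers \<sigma> (2*\<rho>) t \<gamma>)
       \<and> (\<forall>t :: nat \<Rightarrow> real.
            t 0 = 0 \<and>
            (\<forall>k\<in>{1..2*\<rho>+1}. tau t k \<in> {0<..<2*pi}) \<and>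
            (\<forall>k\<in>{2..2*\<rho>-1}. tau t k + tau t (k+1) = 2*pi) \<and>
            tau t (2*\<rho>) + tau t (2*\<rho>+1) \<le> 2*pi
            \<longrightarrow> \<not> steers (-1) (2*\<rho>+1) t \<gamma>)"
proof -
  obtain m where \<rho>: "\<rho> = Suc m"
    using assms(2) not0_implies_Suc by fastforce
  have "2 * \<rho> = 2 * m + 2" "2 * \<rho> + 1 = 2 * m + 3"
    using \<rho> by simp_all
  moreover have "\<not> steers \<sigma> (2 * m + 2) t \<gamma>"
    if "\<sigma> \<in> {1, -1}" "t 0 = 0" "\<forall>k\<in>{1..2 * m + 2}. tau t k \<in> {0<..<2 * pi}"
      "\<forall>k\<in>{2..2 * m}. tau t k + tau t (k + 1) = 2 * pi" for \<sigma> t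
    by (rule even_switching_impossible) (use that in auto)
  moreover have "\<not> steers (-1) (2 * m + 3) t \<gamma>"
    if "t 0 = 0" "\<forall>k\<in>{1..2 * m + 3}. tau t k \<in> {0<..<2 * pi}"
      "\<forall>k\<in>{2..2 * m + 1}. tau t k + tau t (k + 1) = 2 * pi"
      "tau t (2 * m + 2) + tau t (2 * m + 3) \<le> 2 * pi" for t
    by (rule odd_switching_impossible[OF assms(1)]) (use that in auto)
  ultimately show ?thesis
    by (simp add: \<rho> eval_nat_numeral)
qed

end
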